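(* Let $\lambda\ge1$, let $\varphi(z)=1+B_1z+B_2z^2+\cdots$ be as in the context, and let $f(z)=z+\sum_{n\ge2}a_nz^n\in\mathcal R_\Sigma(\lambda,\varphi)$. Then $|a_3-a_2^2|\le\dfrac{B_1}{2\lambda+1}$.
   Context: Let $\mathbb U=\{z\in\mathbb C:|z|<1\}$; $\Sigma$ is the class of $f(z)=z+\sum_{n\ge2}a_nz^n$ analytic and univalent in $\mathbb U$ whose inverse extends to an analytic univalent function $g=f^{-1}$ on $\mathbb U$. $F\prec G$ means $F=G\circ w$ for some analytic $w:\mathbb U\to\mathbb U$ with $w(0)=0$. $\varphi$ is analytic and univalent in $\mathbb U$ with $\Re\varphi>0$, $\varphi(0)=1$, $\varphi'(0)>0$, $\varphi(\mathbb U)$ starlike with respect to $1$ and symmetric with respect to the real axis, $\varphi(z)=1+B_1z+B_2z^2+\cdots$ with real $B_j$, $B_1>0$. $\mathcal R_\Sigma(\lambda,\varphi)$ is the set of $f\in\Sigma$ with $(1-\lambda)\frac{f(z)}{z}+\lambda f'(z)\prec\varphi(z)$ and $(1-\lambda)\frac{g(w)}{w}+\lambda g'(w)\prec\varphi(w)$, $g=f^{-1}$. *)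

theory Defs
  imports "HOL-Analysis.Analysis"
begin

definition coeff0 :: "(complex \<Rightarrow> complex) \<Rightarrow> nat \<Rightarrow> complex" where
  "coeff0 f n = (deriv ^^ n) f 0 / of_nat (fact n)"

definition subord :: "(complex \<Rightarrow> complex) \<Rightarrow> (complex \<Rightarrow> complex) \<Rightarrow> bool" where
  "subord F G \<longleftrightarrow> (\<exists>w. w holomorphic_on ball 0 1 \<and> w ` ball 0 1 \<subseteq> ball 0 1 \<and> w 0 = 0 \<and>
       (\<forall>z\<in>ball 0 1. F z = G (w z)))"

definition normalized_univalent :: "(complex \<Rightarrow> complex) \<Rightarrow> bool" where
  "normalized_univalent f \<longleftrightarrow> f holomorphic_on ball 0 1 \<and> inj_on f (ball 0 1) \<and> f 0 = 0 \<and> deriv f 0 = 1"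

definition inverse_extension :: "(complex \<Rightarrow> complex) \<Rightarrow> (complex \<Rightarrow> complex) \<Rightarrow> bool" where
  "inverse_extension f g \<longleftrightarrow> g holomorphic_on ball 0 1 \<and> inj_on g (ball 0 1) \<and>
     (\<forall>z\<in>ball 0 1. f z \<in> ball 0 1 \<longrightarrow> g (f z) = z)"

definition bi_univalent :: "(complex \<Rightarrow> complex) \<Rightarrow> bool" where
  "bi_univalent f \<longleftrightarrow> normalized_univalent f \<and> (\<exists>g. inverse_extension f g)"

text \<open>h(z)/z with its removable singularity at 0 filled in by h'(0).\<close>
definition quot0 :: "(complex \<Rightarrow> complex) \<Rightarrow> complex \<Rightarrow> complex" where
  "quot0 h z = (if z = 0 then deriv h 0 else h z / z)"

definition bazilevic_expr :: "real \<Rightarrow> (complex \<Rightarrow> complex) \<Rightarrow> complex \<Rightarrow> complex" where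
  "bazilevic_expr lam h z = (1 - of_real lam) * quot0 h z + of_real lam * deriv h z"

definition R_Sigma :: "real \<Rightarrow> (complex \<Rightarrow> complex) \<Rightarrow> (complex \<Rightarrow> complex) \<Rightarrow> bool" where
  "R_Sigma lam \<phi> f \<longleftrightarrow> bi_univalent f \<and>
     (\<exists>g. inverse_extension f g \<and> subord (bazilevic_expr lam f) \<phi> \<and> subord (bazilevic_expr lam g) \<phi>)"

definition admissible_phi :: "(complex \<Rightarrow> complex) \<Rightarrow> bool" where
  "admissible_phi \<phi> \<longleftrightarrow> \<phi> holomorphic_on ball 0 1 \<and> inj_on \<phi> (ball 0 1) \<and>
     (\<forall>z\<in>ball 0 1. Re (\<phi> z) > 0) \<and> \<phi> 0 = 1 \<and>
     deriv \<phi> 0 \<in> \<real> \<and> Re (deriv \<phi> 0) > 0 \<and>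
     (\<forall>x\<in>\<phi> ` ball 0 1. closed_segment 1 x \<subseteq> \<phi> ` ball 0 1) \<and>
     (\<forall>x\<in>\<phi> ` ball 0 1. cnj x \<in> \<phi> ` ball 0 1) \<and>
     (\<forall>n. coeff0 \<phi> n \<in> \<real>)"

end

theory Submission imports Defs "HOL-Complex_Analysis.Complex_Analysis" begin

(* Write the two subordinations as  E_lam f = phi o u  and  E_lam g = phi o v  with Schwarz
   functions u, v, where E_lam h = (1 - lam) h(z)/z + lam h'(z) and g is the inverse of f.
   Comparing Taylor coefficients (via formal power series):
     - E_lam h has n-th coefficient (1 + n lam) a_{n+1}(h);
     - phi o w has coefficients B1 c1 and B1 c2 + B2 c1^2;
     - g = f^{-1} has coefficients 1, -a2, 2 a2^2 - a3.
   The first-order equations give v1 = -u1, and subtracting the second-order equations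
   eliminates B2, leaving  2 (1 + 2 lam) (a3 - a2^2) = B1 (u2 - v2).
   The Cauchy inequality bounds every Taylor coefficient of a Schwarz function by 1,
   so |u2 - v2| <= 2 and the bound follows. *)

lemma coeff0_fps: "coeff0 h n = fps_expansion h 0 $ n"
  by (simp add: coeff0_def fps_expansion_def)

lemma has_fps_expansion_disk:
  "h holomorphic_on ball 0 1 \<Longrightarrow> h has_fps_expansion fps_expansion h 0"
  by (rule has_fps_expansion_fps_expansion) auto

text \<open>Every Taylor coefficient of a self-map of the unit disk has modulus at most 1
  (Cauchy's inequality on the circles of radius r < 1, then r \<rightarrow> 1).\<close>
lemma self_map_disk_coeff_bound:
  assumes hw: "w holomorphic_on ball 0 1" and wb: "w ` ball 0 1 \<subseteq> ball 0 1"
  shows "cmod (coeff0 w n) \<le> 1"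
proof -
  have on_circle: "r ^ n * cmod (coeff0 w n) \<le> 1" if r: "0 < r" "r < 1" for r :: real
  proof -
    have "cmod ((deriv ^^ n) w 0) \<le> fact n * 1 / r ^ n"
    proof (rule Cauchy_inequality)
      show "w holomorphic_on ball 0 r" using r by (intro holomorphic_on_subset[OF hw]) auto
      show "continuous_on (cball 0 r) w"
        using r by (intro holomorphic_on_imp_continuous_on holomorphic_on_subset[OF hw]) auto
      show "cmod (w x) \<le> 1" if "cmod (0 - x) = r" for x
        using wb that r by (force simp: image_subset_iff)
    qed (use r in auto)
    then show ?thesis
      using r by (simp add: coeff0_def norm_divide field_simps)
  qed
  show ?thesis
  proof (cases "n = 0")
    case True
    then show ?thesis using on_circle[of "1/2"] by simp
  next
    case False
    show ?thesis
    proof (rule field_le_mult_one_interval)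
      fix z :: real assume z: "0 < z" "z < 1"
      then show "z * cmod (coeff0 w n) \<le> 1"
        using on_circle[of "root n z"] False by (simp add: real_root_gt_zero)
    qed
  qed
qed

lemma coeff0_compose:
  assumes hp: "\<phi> holomorphic_on ball 0 1" and hw: "w holomorphic_on ball 0 1"
    and w0: "w 0 = 0"
  shows "coeff0 (\<phi> \<circ> w) 1 = coeff0 \<phi> 1 * coeff0 w 1"
    and "coeff0 (\<phi> \<circ> w) 2 = coeff0 \<phi> 1 * coeff0 w 2 + coeff0 \<phi> 2 * (coeff0 w 1)^2"
proof -
  let ?P = "fps_expansion \<phi> 0" and ?W = "fps_expansion w 0"
  have W0: "?W $ 0 = 0" using w0 by (simp add: fps_expansion_def)
  have "(\<phi> \<circ> w) has_fps_expansion (?P oo ?W)"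
    by (rule has_fps_expansion_compose[OF has_fps_expansion_disk[OF hp]
          has_fps_expansion_disk[OF hw] W0])
  then have coeff: "coeff0 (\<phi> \<circ> w) n = (?P oo ?W) $ n" for n
    by (simp add: coeff0_def fps_nth_fps_expansion)
  show "coeff0 (\<phi> \<circ> w) 1 = coeff0 \<phi> 1 * coeff0 w 1"
    by (subst coeff) (simp add: coeff0_fps fps_compose_nth W0)
  show "coeff0 (\<phi> \<circ> w) 2 = coeff0 \<phi> 1 * coeff0 w 2 + coeff0 \<phi> 2 * (coeff0 w 1)^2"
    by (subst coeff) (simp add: coeff0_fps fps_compose_nth W0 numeral_2_eq_2 fps_mult_nth
        power2_eq_square)
qed

text \<open>The n-th coefficient of \<open>(1 - \<lambda>) h(z)/z + \<lambda> h'(z)\<close> is \<open>(1 + n \<lambda>) a_{n+1}(h)\<close>: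
  multiplied by z the expression becomes \<open>(1 - \<lambda>) h + \<lambda> z h'\<close>.\<close>
lemma coeff0_bazilevic_expr:
  assumes hh: "h holomorphic_on ball 0 1" and h0: "h 0 = 0"
    and hp: "p holomorphic_on ball 0 1"
    and eq: "\<And>z. z \<in> ball 0 1 \<Longrightarrow> p z = bazilevic_expr lam h z"
  shows "coeff0 p n = (1 + of_nat n * of_real lam) * coeff0 h (Suc n)"
proof -
  let ?P = "fps_expansion p 0" and ?H = "fps_expansion h 0"
  let ?rhs = "fps_const (1 - of_real lam) * ?H + fps_const (of_real lam) * (fps_X * fps_deriv ?H)"
  have lhs: "(\<lambda>z. z * p z) has_fps_expansion fps_X * ?P"
    by (intro has_fps_expansion_mult has_fps_expansion_fps_X has_fps_expansion_disk[OF hp])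
  have rhs: "(\<lambda>z. (1 - of_real lam) * h z + of_real lam * (z * deriv h z)) has_fps_expansion ?rhs"
    by (intro has_fps_expansion_add has_fps_expansion_cmult_left has_fps_expansion_mult
        has_fps_expansion_fps_X has_fps_expansion_deriv has_fps_expansion_disk[OF hh])
  have "eventually (\<lambda>z. z \<in> ball (0::complex) 1) (nhds 0)"
    by (intro eventually_nhds_in_open) auto
  then have "eventually (\<lambda>z. z * p z = (1 - of_real lam) * h z + of_real lam * (z * deriv h z))
      (nhds 0)"
    by eventually_elim (auto simp: eq h0 bazilevic_expr_def quot0_def field_simps)
  then have "fps_X * ?P = ?rhs"
    using lhs rhs by (metis fps_expansion_unique_complex has_fps_expansion_cong)
  then have "(fps_X * ?P) $ Suc n = ?rhs $ Suc n"
    by simp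
  then show ?thesis
    unfolding coeff0_fps by (simp add: algebra_simps)
qed

lemma bazilevic_subord_coeffs:
  assumes hh: "h holomorphic_on ball 0 1" and h0: "h 0 = 0"
    and hp: "\<phi> holomorphic_on ball 0 1"
    and sub: "subord (bazilevic_expr lam h) \<phi>"
  obtains w where "w holomorphic_on ball 0 1" "w ` ball 0 1 \<subseteq> ball 0 1"
    "(1 + of_real lam) * coeff0 h 2 = coeff0 \<phi> 1 * coeff0 w 1"
    "(1 + 2 * of_real lam) * coeff0 h 3 = coeff0 \<phi> 1 * coeff0 w 2 + coeff0 \<phi> 2 * (coeff0 w 1)^2"
proof -
  from sub obtain w where hw: "w holomorphic_on ball 0 1" and wb: "w ` ball 0 1 \<subseteq> ball 0 1"
    and w0: "w 0 = 0" and weq: "\<And>z. z \<in> ball 0 1 \<Longrightarrow> bazilevic_expr lam h z = \<phi> (w z)"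
    unfolding subord_def by blast
  have "(\<phi> \<circ> w) holomorphic_on ball 0 1"
    by (rule holomorphic_on_compose_gen[OF hw hp wb])
  then have coeff: "coeff0 (\<phi> \<circ> w) n = (1 + of_nat n * of_real lam) * coeff0 h (Suc n)" for n
    by (rule coeff0_bazilevic_expr[OF hh h0]) (simp add: weq)
  show ?thesis
  proof
    show "(1 + of_real lam) * coeff0 h 2 = coeff0 \<phi> 1 * coeff0 w 1"
      using coeff[of 1] coeff0_compose(1)[OF hp hw w0] by (simp add: numeral_2_eq_2)
    show "(1 + 2 * of_real lam) * coeff0 h 3
        = coeff0 \<phi> 1 * coeff0 w 2 + coeff0 \<phi> 2 * (coeff0 w 1)^2"
      using coeff[of 2] coeff0_compose(2)[OF hp hw w0] by (simp add: numeral_3_eq_3)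
  qed (use hw wb in auto)
qed

text \<open>The inverse \<open>g\<close> of a normalised \<open>f = z + a2 z^2 + a3 z^3 + \<dots>\<close> has Taylor expansion
  \<open>g = w - a2 w^2 + (2 a2^2 - a3) w^3 + \<dots>\<close>, read off from \<open>g \<circ> f = id\<close> near 0.\<close>
lemma coeff0_inverse:
  assumes hf: "f holomorphic_on ball 0 1" and hg: "g holomorphic_on ball 0 1"
    and f0: "f 0 = 0" and f1: "coeff0 f 1 = 1"
    and inv: "\<And>z. z \<in> ball 0 1 \<Longrightarrow> f z \<in> ball 0 1 \<Longrightarrow> g (f z) = z"
  shows "coeff0 g 2 = - coeff0 f 2" and "coeff0 g 3 = 2 * (coeff0 f 2)^2 - coeff0 f 3"
proof -
  let ?F = "fps_expansion f 0" and ?G = "fps_expansion g 0"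
  have F0: "?F $ 0 = 0" using f0 by (simp add: fps_expansion_def)
  have F1: "?F $ Suc 0 = 1" using f1 by (simp add: coeff0_fps)
  have comp: "(g \<circ> f) has_fps_expansion (?G oo ?F)"
    by (rule has_fps_expansion_compose[OF has_fps_expansion_disk[OF hg]
          has_fps_expansion_disk[OF hf] F0])
  have "(f \<longlongrightarrow> 0) (at 0)"
    using hf f0 holomorphic_on_imp_continuous_on
    by (metis centre_in_ball continuous_on_interior interior_ball isContD zero_less_one)
  then have "eventually (\<lambda>z. f z \<in> ball 0 1) (nhds 0)"
    using f0 topological_tendstoD[of f 0 "at 0" "ball 0 1"] by (simp add: eventually_nhds_conv_at)
  moreover have "eventually (\<lambda>z. z \<in> ball (0::complex) 1) (nhds 0)"
    by (intro eventually_nhds_in_open) auto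
  ultimately have "eventually (\<lambda>z. (g \<circ> f) z = z) (nhds 0)"
    by eventually_elim (simp add: inv)
  then have "(\<lambda>z. z) has_fps_expansion (?G oo ?F)"
    using comp has_fps_expansion_cong[of "g \<circ> f" "\<lambda>z. z"] by blast
  then have "?G oo ?F = fps_X"
    using fps_expansion_unique_complex has_fps_expansion_fps_X by blast
  then have coeff: "(?G oo ?F) $ n = fps_X $ n" for n
    by simp
  have G1: "?G $ Suc 0 = 1"
    using coeff[of 1] by (simp add: fps_compose_nth F0 F1)
  have G2: "?G $ 2 = - ?F $ 2"
    using coeff[of 2] G1
    by (simp add: fps_compose_nth F0 F1 numeral_2_eq_2 fps_mult_nth power2_eq_square
        add_eq_0_iff2)
  have G3: "?G $ 3 = 2 * (?F $ 2)^2 - ?F $ 3"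
    using coeff[of 3] G1 G2
    by (simp add: fps_compose_nth F0 F1 numeral_3_eq_3 numeral_2_eq_2 fps_mult_nth
        power2_eq_square algebra_simps eq_diff_eq add_eq_0_iff2 del: add_eq_0_iff)
  show "coeff0 g 2 = - coeff0 f 2" "coeff0 g 3 = 2 * (coeff0 f 2)^2 - coeff0 f 3"
    using G2 G3 by (simp_all add: coeff0_fps)
qed

lemma fekete_szego_identity:
  fixes a2 a3 b1 b2 c1 c2 d1 d2 L :: complex
  assumes "b1 \<noteq> 0"
    and f2: "(1 + L) * a2 = b1 * c1" and f3: "(1 + 2 * L) * a3 = b1 * c2 + b2 * c1^2"
    and g2: "(1 + L) * (- a2) = b1 * d1"
    and g3: "(1 + 2 * L) * (2 * a2^2 - a3) = b1 * d2 + b2 * d1^2"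
  shows "2 * (1 + 2 * L) * (a3 - a2^2) = b1 * (c2 - d2)"
proof -
  have "b1 * d1 = b1 * (- c1)"
    using f2 g2 by (metis minus_mult_right)
  then have d1: "d1 = - c1"
    using \<open>b1 \<noteq> 0\<close> mult_left_cancel by blast
  have "2 * (1 + 2 * L) * (a3 - a2^2) = (1 + 2 * L) * a3 - (1 + 2 * L) * (2 * a2^2 - a3)"
    by (simp add: algebra_simps)
  also have "\<dots> = (b1 * c2 + b2 * c1^2) - (b1 * d2 + b2 * d1^2)"
    by (simp only: f3 g3)
  also have "\<dots> = b1 * (c2 - d2)"
    by (simp add: d1 algebra_simps)
  finally show ?thesis .
qed

text \<open>Turning the identity into the estimate: the Schwarz coefficients differ by at most 2.\<close>
lemma fekete_szego_estimate:
  fixes X c2 d2 :: complex and lam B :: real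
  assumes lam: "2 * lam + 1 > 0" and "B > 0"
    and eq: "2 * (1 + 2 * of_real lam) * X = of_real B * (c2 - d2)"
    and "cmod c2 \<le> 1" and "cmod d2 \<le> 1"
  shows "cmod X \<le> B / (2 * lam + 1)"
proof -
  have "of_real (2 * (2 * lam + 1)) * X = of_real B * (c2 - d2)"
    using eq by (simp add: algebra_simps)
  then have "2 * (2 * lam + 1) * cmod X = B * cmod (c2 - d2)"
    using lam \<open>B > 0\<close> by (metis abs_of_pos norm_mult norm_of_real zero_less_mult_iff zero_less_numeral)
  also have "\<dots> \<le> B * 2"
    using assms(4,5) \<open>B > 0\<close> norm_triangle_ineq4[of c2 d2] by (intro mult_left_mono) auto
  finally show ?thesis
    using lam by (simp add: field_simps)
qed

lemma admissible_phi_B1: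
  assumes "admissible_phi \<phi>"
  shows "coeff0 \<phi> 1 = of_real (Re (coeff0 \<phi> 1))" and "Re (coeff0 \<phi> 1) > 0"
  using assms by (auto simp: admissible_phi_def coeff0_def complex_is_Real_iff complex_eq_iff)

lemma R_Sigma_unfold:
  assumes "R_Sigma lam \<phi> f"
  obtains g where "f holomorphic_on ball 0 1" "f 0 = 0" "coeff0 f 1 = 1"
    "g holomorphic_on ball 0 1" "g 0 = 0"
    "\<And>z. z \<in> ball 0 1 \<Longrightarrow> f z \<in> ball 0 1 \<Longrightarrow> g (f z) = z"
    "subord (bazilevic_expr lam f) \<phi>" "subord (bazilevic_expr lam g) \<phi>"
proof -
  from assms obtain g where "bi_univalent f" "inverse_extension f g"
    "subord (bazilevic_expr lam f) \<phi>" "subord (bazilevic_expr lam g) \<phi>"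
    unfolding R_Sigma_def by blast
  moreover have "g 0 = 0"
    using calculation(1,2) unfolding bi_univalent_def normalized_univalent_def inverse_extension_def
    by (metis centre_in_ball zero_less_one)
  ultimately show ?thesis
    using that by (auto simp: bi_univalent_def normalized_univalent_def inverse_extension_def coeff0_def)
qed

theorem corollary3p16:
  fixes lam :: real and \<phi> f :: "complex \<Rightarrow> complex"
  assumes "lam \<ge> 1"
    and "admissible_phi \<phi>"
    and "R_Sigma lam \<phi> f"
  shows "cmod (coeff0 f 3 - (coeff0 f 2)\<^sup>2) \<le> Re (coeff0 \<phi> 1) / (2 * lam + 1)"
proof -
  obtain g where hf: "f holomorphic_on ball 0 1" and f0: "f 0 = 0" and f1: "coeff0 f 1 = 1"
    and hg: "g holomorphic_on ball 0 1" and g0: "g 0 = 0"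
    and inv: "\<And>z. z \<in> ball 0 1 \<Longrightarrow> f z \<in> ball 0 1 \<Longrightarrow> g (f z) = z"
    and sf: "subord (bazilevic_expr lam f) \<phi>" and sg: "subord (bazilevic_expr lam g) \<phi>"
    using R_Sigma_unfold[OF assms(3)] by blast
  have hp: "\<phi> holomorphic_on ball 0 1"
    using assms(2) by (simp add: admissible_phi_def)
  note B1 = admissible_phi_B1[OF assms(2)]
  obtain u where u: "u holomorphic_on ball 0 1" "u ` ball 0 1 \<subseteq> ball 0 1"
    and f2: "(1 + of_real lam) * coeff0 f 2 = coeff0 \<phi> 1 * coeff0 u 1"
    and f3: "(1 + 2 * of_real lam) * coeff0 f 3 = coeff0 \<phi> 1 * coeff0 u 2 + coeff0 \<phi> 2 * (coeff0 u 1)^2"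
    using bazilevic_subord_coeffs[OF hf f0 hp sf] by blast
  obtain v where v: "v holomorphic_on ball 0 1" "v ` ball 0 1 \<subseteq> ball 0 1"
    and g2: "(1 + of_real lam) * coeff0 g 2 = coeff0 \<phi> 1 * coeff0 v 1"
    and g3: "(1 + 2 * of_real lam) * coeff0 g 3 = coeff0 \<phi> 1 * coeff0 v 2 + coeff0 \<phi> 2 * (coeff0 v 1)^2"
    using bazilevic_subord_coeffs[OF hg g0 hp sg] by blast
  have "2 * (1 + 2 * of_real lam) * (coeff0 f 3 - (coeff0 f 2)^2)
      = of_real (Re (coeff0 \<phi> 1)) * (coeff0 u 2 - coeff0 v 2)"
    using fekete_szego_identity[OF _ f2 f3] g2 g3 B1 coeff0_inverse[OF hf hg f0 f1 inv] by force
  then show ?thesis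
    using assms(1) B1(2) self_map_disk_coeff_bound[OF u] self_map_disk_coeff_bound[OF v]
    by (intro fekete_szego_estimate) auto
qed

end
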